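(* Let $K\in\mathbb{N}$ and $f_1,\dots,f_K\in\mathcal{S}'(\mathbb{Z}^{d})$. Define $d:\mathbb{Z}^d\to\mathbb{C}$ by $d(\mathbf{n})=\max\{|f_1(\mathbf{n})|,\dots,|f_K(\mathbf{n})|\}$. Then $d\in\mathcal{S}'(\mathbb{Z}^{d})$ and $d$ is a greatest common divisor of $f_1,\dots,f_K$ in $\mathcal{S}'(\mathbb{Z}^{d})$: $d$ divides each $f_k$, and every common divisor $\tilde d\in\mathcal{S}'(\mathbb{Z}^{d})$ of $f_1,\dots,f_K$ divides $d$. (In particular every finite family has a gcd, unique up to invertible factors.)
   Context: For $\mathbf{n}=(n_1,\dots,n_d)\in\mathbb{Z}^d$ write $\|\mathbf{n}\|:=|n_1|+\cdots+|n_d|$. $\mathcal{S}'(\mathbb{Z}^{d})$ denotes the set of all maps $f:\mathbb{Z}^d\to\mathbb{C}$ of at most polynomial growth, i.e. for which there exist a real $M>0$ and an integer $m\geq 0$ with $|f(\mathbf{n})|\leq M(1+\|\mathbf{n}\|)^m$ for all $\mathbf{n}\in\mathbb{Z}^d$. It is a commutative unital ring under pointwise addition and multiplication, with unit the constant function $1$. Divisibility refers to this ring. *)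

theory Defs
  imports "HOL-Analysis.Analysis"
begin

text \<open>Lattice points in Z^d are modelled as functions 'd \<Rightarrow> int with 'd a finite index type
  (d = CARD('d)).\<close>

definition l1norm :: "('d::finite \<Rightarrow> int) \<Rightarrow> real" where
  "l1norm n = (\<Sum>i\<in>UNIV. real_of_int \<bar>n i\<bar>)"

definition tempered :: "(('d::finite \<Rightarrow> int) \<Rightarrow> complex) \<Rightarrow> bool" where
  "tempered f \<longleftrightarrow> (\<exists>M::real. M > 0 \<and> (\<exists>m::nat. \<forall>n. cmod (f n) \<le> M * (1 + l1norm n) ^ m))"

definition sdvd :: "(('d::finite \<Rightarrow> int) \<Rightarrow> complex) \<Rightarrow> (('d \<Rightarrow> int) \<Rightarrow> complex) \<Rightarrow> bool" where
  "sdvd a b \<longleftrightarrow> (\<exists>c. tempered c \<and> (\<forall>n. b n = a n * c n))"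

end

theory Submission
  imports Defs
begin

text \<open>The maximum d of the moduli dominates every f_k, so each quotient f_k / d has modulus
  at most 1; conversely, if e divides every f_k = e c_k, then at each point d agrees in modulus
  with some f_k, so |d / e| equals some |c_k| and is dominated by the finitely many tempered c_k.
  Both quotients are taken pointwise, with the value 0 where the divisor vanishes.\<close>

lemma l1norm_nonneg: "l1norm n \<ge> 0"
  unfolding l1norm_def by (simp add: sum_nonneg)

lemma tempered_bounded:
  fixes c :: "('d::finite \<Rightarrow> int) \<Rightarrow> complex"
  assumes "\<forall>n. cmod (c n) \<le> B"
  shows "tempered c"
  unfolding tempered_def
proof (intro exI conjI allI)
  show "(1 + \<bar>B\<bar>) > 0" by simp
  show "cmod (c n) \<le> (1 + \<bar>B\<bar>) * (1 + l1norm n) ^ 0" for n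
    using assms[rule_format, of n] abs_ge_self[of B] by simp
qed

lemma tempered_dominated_by_finite_family:
  fixes g :: "'i \<Rightarrow> ('d::finite \<Rightarrow> int) \<Rightarrow> complex" and h :: "('d \<Rightarrow> int) \<Rightarrow> complex"
  assumes "finite I" "\<forall>k\<in>I. tempered (g k)"
    and "\<forall>n. \<exists>k\<in>I. cmod (h n) \<le> cmod (g k n)"
  shows "tempered h"
proof -
  obtain M m where M: "\<forall>k\<in>I. M k > 0 \<and> (\<forall>n. cmod (g k n) \<le> M k * (1 + l1norm n) ^ m k)"
    using assms(2) unfolding tempered_def by metis
  define M' where "M' = 1 + (\<Sum>k\<in>I. M k)"
  define m' where "m' = Max (m ` I)"
  have "M' > 0"
    unfolding M'_def using M by (simp add: add_pos_nonneg less_imp_le sum_nonneg)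
  moreover have "cmod (h n) \<le> M' * (1 + l1norm n) ^ m'" for n
  proof -
    obtain k where k: "k \<in> I" "cmod (h n) \<le> cmod (g k n)"
      using assms(3) by blast
    have base: "1 \<le> 1 + l1norm n"
      using l1norm_nonneg[of n] by simp
    have "M k \<le> (\<Sum>k\<in>I. M k)"
      using k(1) M assms(1) by (intro member_le_sum) (auto intro: less_imp_le)
    then have "M k \<le> M'"
      unfolding M'_def by simp
    moreover have "(1 + l1norm n) ^ m k \<le> (1 + l1norm n) ^ m'"
      unfolding m'_def using k(1) assms(1) base by (intro power_increasing) auto
    ultimately have "M k * (1 + l1norm n) ^ m k \<le> M' * (1 + l1norm n) ^ m'"
      using M k(1) base by (intro mult_mono) auto
    then show ?thesis
      using k M by (meson order_trans)
  qed
  ultimately show ?thesis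
    unfolding tempered_def by blast
qed

lemma sdvd_via_quotient:
  assumes "\<forall>n. a n = 0 \<longrightarrow> b n = 0" and "tempered (\<lambda>n. b n / a n)"
  shows "sdvd a b"
  unfolding sdvd_def using assms by (intro exI[of _ "\<lambda>n. b n / a n"]) auto

lemma sdvd_if_norm_le:
  assumes "\<forall>n. cmod (b n) \<le> cmod (a n)"
  shows "sdvd a b"
proof (rule sdvd_via_quotient)
  show "\<forall>n. a n = 0 \<longrightarrow> b n = 0"
    using assms by (metis norm_le_zero_iff norm_zero)
  show "tempered (\<lambda>n. b n / a n)"
    using assms by (intro tempered_bounded[of _ 1])
      (auto simp: norm_divide divide_le_eq_1 order.strict_iff_order)
qed

lemma sdvd_if_norm_attained:
  fixes g :: "'i \<Rightarrow> ('d::finite \<Rightarrow> int) \<Rightarrow> complex"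
  assumes "finite I" "\<forall>n. \<exists>k\<in>I. cmod (b n) = cmod (g k n)" "\<forall>k\<in>I. sdvd a (g k)"
  shows "sdvd a b"
proof -
  obtain c where c: "\<forall>k\<in>I. tempered (c k) \<and> (\<forall>n. g k n = a n * c k n)"
    using assms(3) unfolding sdvd_def by metis
  have b_pointwise: "(a n = 0 \<longrightarrow> b n = 0) \<and> (\<exists>k\<in>I. cmod (b n / a n) \<le> cmod (c k n))" for n
  proof -
    obtain k where "k \<in> I" "cmod (b n) = cmod (a n * c k n)"
      using assms(2) c by metis
    then show ?thesis
      by (cases "a n = 0") (auto simp: norm_divide norm_mult)
  qed
  have "tempered (\<lambda>n. b n / a n)"
    using assms(1) c b_pointwise by (intro tempered_dominated_by_finite_family[of I c]) auto
  with b_pointwise show ?thesis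
    by (intro sdvd_via_quotient) auto
qed

theorem proposition2p2:
  fixes K :: nat and f :: "nat \<Rightarrow> ('d::finite \<Rightarrow> int) \<Rightarrow> complex"
    and d :: "('d \<Rightarrow> int) \<Rightarrow> complex"
  assumes "K \<ge> 1"
    and "\<forall>k\<in>{1..K}. tempered (f k)"
    and "\<forall>n. d n = complex_of_real (Max ((\<lambda>k. cmod (f k n)) ` {1..K}))"
  shows "tempered d \<and> (\<forall>k\<in>{1..K}. sdvd d (f k))
         \<and> (\<forall>e. tempered e \<and> (\<forall>k\<in>{1..K}. sdvd e (f k)) \<longrightarrow> sdvd e d)"
proof -
  have d_norm: "cmod (d n) = Max ((\<lambda>k. cmod (f k n)) ` {1..K})" for n
  proof -
    have "0 \<le> Max ((\<lambda>k. cmod (f k n)) ` {1..K})"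
      using assms(1) by (subst Max_ge_iff) auto
    then show ?thesis
      using assms(3) by simp
  qed
  have d_attained: "\<forall>n. \<exists>k\<in>{1..K}. cmod (d n) = cmod (f k n)"
  proof
    fix n
    have "Max ((\<lambda>k. cmod (f k n)) ` {1..K}) \<in> (\<lambda>k. cmod (f k n)) ` {1..K}"
      using assms(1) by (intro Max_in) auto
    then show "\<exists>k\<in>{1..K}. cmod (d n) = cmod (f k n)"
      unfolding d_norm by auto
  qed
  have "tempered d"
    using d_attained by (intro tempered_dominated_by_finite_family[OF _ assms(2)]) (auto intro: eq_refl)
  moreover have "sdvd d (f k)" if "k \<in> {1..K}" for k
    using that by (intro sdvd_if_norm_le allI) (auto simp: d_norm intro: Max_ge)
  moreover have "sdvd e d" if "\<forall>k\<in>{1..K}. sdvd e (f k)" for e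
    using d_attained that by (intro sdvd_if_norm_attained[of "{1..K}"]) auto
  ultimately show ?thesis by blast
qed

end
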